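(* Let $T$ be a finite set of students and $S$ a finite set of schools, each school having capacity $q\ge 1$, with $|T|\le q|S|$. Each student $t$ has a strict preference order $\succ_t$ over $S$ (every school is preferred to being unmatched), and each school $s$ has a strict priority order $\rhd_s$ over $T$. Let $\mu^\Omega$ denote the student-optimal stable matching of the whole market $T\cup S$. Let $\mathcal{D}'=\{D'_1,\dots,D'_{r'}\}$ be a partition of $T\cup S$ into parts $D'_i$, each containing at least one student and at least one school, with $T^{D'_i}=T\cap D'_i$ and $S^{D'_i}=S\cap D'_i$, such that for every $i\in\{1,\dots,r'\}$: if $t\in T^{D'_i}$ and $\mu^\Omega(t)=s$ for a school $s$, then $s\in S^{D'_i}$. For each $i$, let $\mu^{D'_i}$ denote the student-optimal stable matching of the sub-market consisting of the students $T^{D'_i}$ and schools $S^{D'_i}$ (with the preferences and priorities restricted to this sub-market), and for $t\in T^{D'_i}$ write $\mu^{D'}(t)=\mu^{D'_i}(t)$. Then for every student $t\in T$, $\mu^{D'}(t)\succcurlyeq_t \mu^\Omega(t)$, where $a\succcurlyeq_t b$ means $a\succ_t b$ or $a=b$.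
   Context: A matching of a population with students $T^P$ and schools $S^P$ is a correspondence $\mu$ with $\mu(t)\in S^P\cup\{t\}$ for each student ($\mu(t)=t$ meaning unmatched), $\mu(s)\subseteq T^P$ with $|\mu(s)|\le q$, and $\mu(t)=s$ iff $t\in\mu(s)$. Each school's choice rule is responsive to its priority order (it admits its highest-priority applicants up to capacity). A matching is stable if there is no pair $(t,s)$ with either (i) $\mu(t)=t$ and $|\mu(s)|<q$, or (ii) $s\succ_t\mu(t)$ and $t\rhd_s t'$ for some $t'\in\mu(s)$. The student-optimal stable matching is the stable matching that every student weakly prefers to every other stable matching (it exists and is computed by student-proposing deferred acceptance). *)

theory Defs
  imports Main
begin

text \<open>Students have type 'a, schools have type 'b.  A matching is a function
  mu :: 'a => 'b option; mu t = None means that t is unmatched (mu(t) = t).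
  P t s s' means that student t strictly prefers school s to school s'.
  Pr s t t' means that t has strictly higher priority than t' at school s.\<close>

definition strict_total_on :: "'c set \<Rightarrow> ('c \<Rightarrow> 'c \<Rightarrow> bool) \<Rightarrow> bool" where
  "strict_total_on A R \<longleftrightarrow>
     (\<forall>x\<in>A. \<not> R x x) \<and>
     (\<forall>x\<in>A. \<forall>y\<in>A. \<forall>z\<in>A. R x y \<longrightarrow> R y z \<longrightarrow> R x z) \<and>
     (\<forall>x\<in>A. \<forall>y\<in>A. x \<noteq> y \<longrightarrow> R x y \<or> R y x)"

definition assigned :: "'a set \<Rightarrow> ('a \<Rightarrow> 'b option) \<Rightarrow> 'b \<Rightarrow> 'a set" where
  "assigned Tp mu s = {t \<in> Tp. mu t = Some s}"

fun prefers :: "('a \<Rightarrow> 'b \<Rightarrow> 'b \<Rightarrow> bool) \<Rightarrow> 'a \<Rightarrow> 'b option \<Rightarrow> 'b option \<Rightarrow> bool" where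
  "prefers P t (Some s) (Some s') = P t s s'"
| "prefers P t (Some s) None = True"
| "prefers P t None _ = False"

definition weakly_prefers :: "('a \<Rightarrow> 'b \<Rightarrow> 'b \<Rightarrow> bool) \<Rightarrow> 'a \<Rightarrow> 'b option \<Rightarrow> 'b option \<Rightarrow> bool" where
  "weakly_prefers P t x y \<longleftrightarrow> prefers P t x y \<or> x = y"

definition is_matching :: "nat \<Rightarrow> 'a set \<Rightarrow> 'b set \<Rightarrow> ('a \<Rightarrow> 'b option) \<Rightarrow> bool" where
  "is_matching q Tp Sp mu \<longleftrightarrow>
     (\<forall>t\<in>Tp. mu t = None \<or> (\<exists>s\<in>Sp. mu t = Some s)) \<and>
     (\<forall>t. t \<notin> Tp \<longrightarrow> mu t = None) \<and>
     (\<forall>s\<in>Sp. card (assigned Tp mu s) \<le> q)"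

definition stable :: "nat \<Rightarrow> ('a \<Rightarrow> 'b \<Rightarrow> 'b \<Rightarrow> bool) \<Rightarrow> ('b \<Rightarrow> 'a \<Rightarrow> 'a \<Rightarrow> bool)
    \<Rightarrow> 'a set \<Rightarrow> 'b set \<Rightarrow> ('a \<Rightarrow> 'b option) \<Rightarrow> bool" where
  "stable q P Pr Tp Sp mu \<longleftrightarrow>
     is_matching q Tp Sp mu \<and>
     (\<nexists>t s. t \<in> Tp \<and> s \<in> Sp \<and>
        ((mu t = None \<and> card (assigned Tp mu s) < q) \<or>
         (prefers P t (Some s) (mu t) \<and> (\<exists>t'\<in>assigned Tp mu s. Pr s t t'))))"

definition student_optimal_stable :: "nat \<Rightarrow> ('a \<Rightarrow> 'b \<Rightarrow> 'b \<Rightarrow> bool) \<Rightarrow> ('b \<Rightarrow> 'a \<Rightarrow> 'a \<Rightarrow> bool)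
    \<Rightarrow> 'a set \<Rightarrow> 'b set \<Rightarrow> ('a \<Rightarrow> 'b option) \<Rightarrow> bool" where
  "student_optimal_stable q P Pr Tp Sp mu \<longleftrightarrow>
     stable q P Pr Tp Sp mu \<and>
     (\<forall>nu. stable q P Pr Tp Sp nu \<longrightarrow> (\<forall>t\<in>Tp. weakly_prefers P t (mu t) (nu t)))"

end

theory Submission
  imports Defs
begin

text \<open>The restriction of \<open>\<mu>\<^sup>\<Omega>\<close> to a part \<open>D'\<^sub>i\<close> is a stable matching of the sub-market:
  every student is matched inside his own part and the parts are disjoint, so no student
  outside \<open>D'\<^sub>i\<close> holds a seat at a school of \<open>D'\<^sub>i\<close>; hence each school of the part keeps
  exactly its admitted students, and a blocking pair of the sub-market would block
  \<open>\<mu>\<^sup>\<Omega>\<close>. Student-optimality of the sub-market's matching then gives the claim.\<close>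

lemma assigned_restrict_map:
  assumes "T' \<subseteq> T" and "\<forall>t\<in>T. mu t = Some s \<longrightarrow> t \<in> T'"
  shows "assigned T' (mu |` T') s = assigned T mu s"
  using assms unfolding assigned_def restrict_map_def by auto

lemma is_matching_restrict_map:
  assumes "is_matching q T S mu" and "T' \<subseteq> T" and "S' \<subseteq> S"
    and matched_inside: "\<forall>t\<in>T'. \<forall>s. mu t = Some s \<longrightarrow> s \<in> S'"
    and no_intruders: "\<forall>t\<in>T. \<forall>s\<in>S'. mu t = Some s \<longrightarrow> t \<in> T'"
  shows "is_matching q T' S' (mu |` T')"
  unfolding is_matching_def
proof (intro conjI ballI allI impI)
  show "(mu |` T') t = None \<or> (\<exists>s\<in>S'. (mu |` T') t = Some s)" if "t \<in> T'" for t
    using matched_inside that by (cases "mu t") auto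
  show "(mu |` T') t = None" if "t \<notin> T'" for t
    using that by simp
  show "card (assigned T' (mu |` T') s) \<le> q" if "s \<in> S'" for s
    using assms that assigned_restrict_map[OF \<open>T' \<subseteq> T\<close>, of mu s]
    unfolding is_matching_def by auto
qed

lemma stable_restrict_map:
  assumes stab: "stable q P Pr T S mu" and "T' \<subseteq> T" and "S' \<subseteq> S"
    and matched_inside: "\<forall>t\<in>T'. \<forall>s. mu t = Some s \<longrightarrow> s \<in> S'"
    and no_intruders: "\<forall>t\<in>T. \<forall>s\<in>S'. mu t = Some s \<longrightarrow> t \<in> T'"
  shows "stable q P Pr T' S' (mu |` T')"
  unfolding stable_def
proof (intro conjI notI)
  show "is_matching q T' S' (mu |` T')"
    using stab assms(2-) is_matching_restrict_map unfolding stable_def by blast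
  assume "\<exists>t s. t \<in> T' \<and> s \<in> S' \<and>
     ((mu |` T') t = None \<and> card (assigned T' (mu |` T') s) < q \<or>
      prefers P t (Some s) ((mu |` T') t) \<and> (\<exists>t'\<in>assigned T' (mu |` T') s. Pr s t t'))"
  then obtain t s where "t \<in> T'" "s \<in> S'" and
    "mu t = None \<and> card (assigned T mu s) < q \<or>
     prefers P t (Some s) (mu t) \<and> (\<exists>t'\<in>assigned T mu s. Pr s t t')"
    using assigned_restrict_map[OF \<open>T' \<subseteq> T\<close>] no_intruders by (metis restrict_in)
  then show False
    using stab \<open>T' \<subseteq> T\<close> \<open>S' \<subseteq> S\<close> unfolding stable_def by blast
qed

theorem proposition1:
  fixes T :: "'a set" and S :: "'b set" and q :: nat
    and P :: "'a \<Rightarrow> 'b \<Rightarrow> 'b \<Rightarrow> bool" and Pr :: "'b \<Rightarrow> 'a \<Rightarrow> 'a \<Rightarrow> bool"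
    and muO :: "'a \<Rightarrow> 'b option"
    and r :: nat and TD :: "nat \<Rightarrow> 'a set" and SD :: "nat \<Rightarrow> 'b set"
    and muD :: "nat \<Rightarrow> 'a \<Rightarrow> 'b option"
  assumes finT: "finite T" and finS: "finite S"
    and q_pos: "q \<ge> 1" and size: "card T \<le> q * card S"
    and prefs: "\<forall>t\<in>T. strict_total_on S (P t)"
    and prios: "\<forall>s\<in>S. strict_total_on T (Pr s)"
    and optO: "student_optimal_stable q P Pr T S muO"
    and partT: "(\<Union>i<r. TD i) = T" and partS: "(\<Union>i<r. SD i) = S"
    and disjT: "\<forall>i<r. \<forall>j<r. i \<noteq> j \<longrightarrow> TD i \<inter> TD j = {}"
    and disjS: "\<forall>i<r. \<forall>j<r. i \<noteq> j \<longrightarrow> SD i \<inter> SD j = {}"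
    and nonemptyT: "\<forall>i<r. TD i \<noteq> {}" and nonemptyS: "\<forall>i<r. SD i \<noteq> {}"
    and closed: "\<forall>i<r. \<forall>t\<in>TD i. \<forall>s. muO t = Some s \<longrightarrow> s \<in> SD i"
    and optD: "\<forall>i<r. student_optimal_stable q P Pr (TD i) (SD i) (muD i)"
  shows "\<forall>i<r. \<forall>t\<in>TD i. weakly_prefers P t (muD i t) (muO t)"
proof (intro allI impI ballI)
  fix i t
  assume "i < r" and "t \<in> TD i"
  have no_intruders: "\<forall>x\<in>T. \<forall>s\<in>SD i. muO x = Some s \<longrightarrow> x \<in> TD i"
  proof (intro ballI impI)
    fix x s
    assume "x \<in> T" "s \<in> SD i" "muO x = Some s"
    obtain j where "j < r" "x \<in> TD j"
      using partT \<open>x \<in> T\<close> by blast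
    then have "s \<in> SD j"
      using closed \<open>muO x = Some s\<close> by blast
    then have "j = i"
      using disjS \<open>j < r\<close> \<open>i < r\<close> \<open>s \<in> SD i\<close> by blast
    with \<open>x \<in> TD j\<close> show "x \<in> TD i" by simp
  qed
  have "stable q P Pr T S muO"
    using optO unfolding student_optimal_stable_def by blast
  moreover have "TD i \<subseteq> T" "SD i \<subseteq> S"
    using \<open>i < r\<close> partT partS by blast+
  moreover have "\<forall>x\<in>TD i. \<forall>s. muO x = Some s \<longrightarrow> s \<in> SD i"
    using closed \<open>i < r\<close> by blast
  ultimately have "stable q P Pr (TD i) (SD i) (muO |` TD i)"
    using no_intruders by (rule stable_restrict_map)
  moreover have "student_optimal_stable q P Pr (TD i) (SD i) (muD i)"
    using optD \<open>i < r\<close> by blast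
  ultimately have "weakly_prefers P t (muD i t) ((muO |` TD i) t)"
    using \<open>t \<in> TD i\<close> unfolding student_optimal_stable_def by blast
  then show "weakly_prefers P t (muD i t) (muO t)"
    using \<open>t \<in> TD i\<close> by simp
qed

end
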